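(* Let $\chi$ and $\zeta$ be two splitting maps on $\mathcal H$ with $\zeta\sqsubseteq\chi$. Then (1) $\mathrm{loc}(\zeta)\subseteq\mathrm{loc}(\chi)$ and (2) $\mathrm{stloc}(\zeta)\subseteq\mathrm{stloc}(\chi)$.
   Context: All Hilbert spaces are finite-dimensional and complex. A splitting map on $\mathcal H$ is an isometry $\chi:\mathcal H\to\mathcal H_L^\chi\otimes\mathcal H_R^\chi$. $A\in\mathcal L(\mathcal H)$ is $\chi$-local if $A=\chi^\dagger(\tilde A\otimes\mathbb 1)\chi$ for some $\tilde A\in\mathcal L(\mathcal H_L^\chi)$; $\mathrm{loc}(\chi)$ is the set of these. $A$ is strictly $\chi$-local if there exists $\tilde A\in\mathcal L(\mathcal H_L^\chi)$ with $A\chi^\dagger=\chi^\dagger(\tilde A\otimes\mathbb 1)$ and $\chi A=(\tilde A\otimes\mathbb 1)\chi$; $\mathrm{stloc}(\chi)$ is the set of these. Comprehension: $\zeta\sqsubseteq\chi$ if there exist a Hilbert space $\mathcal H_M$ and isometries $\bullet:\mathcal H_R^\zeta\to\mathcal H_M\otimes\mathcal H_R^\chi$ and $\circ:\mathcal H_L^\chi\to\mathcal H_L^\zeta\otimes\mathcal H_M$ with $(\mathbb 1_{\mathcal H_L^\zeta}\otimes\bullet)\zeta=(\circ\otimes\mathbb 1_{\mathcal H_R^\chi})\chi$. *)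

theory Defs
  imports "Jordan_Normal_Form.Matrix"
begin

(* Finite-dimensional complex Hilbert spaces are modelled as C^d (given by their
   dimension d), linear maps as complex matrices, tensor products as Kronecker
   products (row-major convention, which is associative on indices). *)

definition adj :: "complex mat \<Rightarrow> complex mat" where
  "adj A = mat (dim_col A) (dim_row A) (\<lambda>(i,j). cnj (A $$ (j,i)))"

definition kron :: "complex mat \<Rightarrow> complex mat \<Rightarrow> complex mat" where
  "kron A B = mat (dim_row A * dim_row B) (dim_col A * dim_col B)
     (\<lambda>(i,j). A $$ (i div dim_row B, j div dim_col B) * B $$ (i mod dim_row B, j mod dim_col B))"

definition isometry :: "complex mat \<Rightarrow> nat \<Rightarrow> nat \<Rightarrow> bool" where
  "isometry V m n \<longleftrightarrow> V \<in> carrier_mat m n \<and> adj V * V = 1\<^sub>m n"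

definition splitting_map :: "nat \<Rightarrow> nat \<Rightarrow> nat \<Rightarrow> complex mat \<Rightarrow> bool" where
  "splitting_map n dL dR \<chi> \<longleftrightarrow> isometry \<chi> (dL * dR) n"

definition loc :: "nat \<Rightarrow> nat \<Rightarrow> nat \<Rightarrow> complex mat \<Rightarrow> complex mat set" where
  "loc n dL dR \<chi> = {A \<in> carrier_mat n n. \<exists>At \<in> carrier_mat dL dL.
      A = adj \<chi> * kron At (1\<^sub>m dR) * \<chi>}"

definition stloc :: "nat \<Rightarrow> nat \<Rightarrow> nat \<Rightarrow> complex mat \<Rightarrow> complex mat set" where
  "stloc n dL dR \<chi> = {A \<in> carrier_mat n n. \<exists>At \<in> carrier_mat dL dL.
      A * adj \<chi> = adj \<chi> * kron At (1\<^sub>m dR) \<and> \<chi> * A = kron At (1\<^sub>m dR) * \<chi>}"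

(* comprehension  zeta \<sqsubseteq> chi ;  zeta : H \<rightarrow> C^dLz \<otimes> C^dRz,  chi : H \<rightarrow> C^dLc \<otimes> C^dRc *)
definition comprehends :: "nat \<Rightarrow> nat \<Rightarrow> complex mat \<Rightarrow> nat \<Rightarrow> nat \<Rightarrow> complex mat \<Rightarrow> bool" where
  "comprehends dLz dRz \<zeta> dLc dRc \<chi> \<longleftrightarrow>
     (\<exists>dM bul cir. isometry bul (dM * dRc) dRz \<and> isometry cir (dLz * dM) dLc \<and>
        kron (1\<^sub>m dLz) bul * \<zeta> = kron cir (1\<^sub>m dRc) * \<chi>)"

end

theory Submission
  imports Defs
begin

(* Put B = 1 \<otimes> bul and C = cir \<otimes> 1. Both are isometries into the common space
   H_L^zeta \<otimes> H_M \<otimes> H_R^chi, and comprehension says B zeta = C chi. An operator T on H_L^zeta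
   extends there to K = T \<otimes> 1, which intertwines B (K B = B (T \<otimes> 1)) and is compressed by C
   to adj C K C = T' \<otimes> 1 with T' = adj cir (T \<otimes> 1) cir. Hence
   adj zeta (T \<otimes> 1) zeta = adj (B zeta) K (B zeta) = adj (C chi) K (C chi) = adj chi (T' \<otimes> 1) chi,
   and the two intertwining relations defining strict locality transfer in the same way,
   using chi = adj C B zeta. *)

lemma mod_less_of_less_mult: "(i::nat) < a * b \<Longrightarrow> i mod b < b"
  by (metis mod_less_divisor mult_0_right neq0_conv not_less0)

lemmas index_mult_less = less_mult_imp_div_less mod_less_of_less_mult

lemma mult_add_less_mult: "(a::nat) < m \<Longrightarrow> b < n \<Longrightarrow> a * n + b < m * n"
proof -
  assume "a < m" "b < n"
  then have "a * n + b < Suc a * n" by simp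
  also have "\<dots> \<le> m * n" using \<open>a < m\<close> by (intro mult_le_mono1) simp
  finally show ?thesis .
qed

lemma sum_lessThan_mult_div_mod:
  fixes f :: "nat \<Rightarrow> nat \<Rightarrow> 'a::comm_monoid_add"
  shows "(\<Sum>k<m * n. f (k div n) (k mod n)) = (\<Sum>a<m. \<Sum>b<n. f a b)"
proof -
  have "(\<Sum>k<m * n. f (k div n) (k mod n)) = (\<Sum>(a, b)\<in>{..<m} \<times> {..<n}. f a b)"
    by (rule sum.reindex_bij_witness[where i = "\<lambda>(a, b). a * n + b" and j = "\<lambda>k. (k div n, k mod n)"])
      (auto simp: index_mult_less mult_add_less_mult)
  then show ?thesis
    by (simp add: sum.cartesian_product)
qed

lemma div_mult_eq_div_div: "(i::nat) div (b * c) = i div c div b"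
  by (metis div_mult2_eq mult.commute)

lemma mod_mult_div_eq_div_mod: "((i::nat) mod (b * c)) div c = i div c mod b"
proof (cases "c = 0")
  case False
  have "i mod (b * c) = c * (i div c mod b) + i mod c"
    by (metis mod_mult2_eq mult.commute)
  then show ?thesis
    using False by simp
qed simp

lemma adj_carrier_mat [simp]: "A \<in> carrier_mat m n \<Longrightarrow> adj A \<in> carrier_mat n m"
  by (auto simp: adj_def)

lemma dim_adj [simp]: "dim_row (adj A) = dim_col A" "dim_col (adj A) = dim_row A"
  by (auto simp: adj_def)

lemma index_adj [simp]: "i < dim_col A \<Longrightarrow> j < dim_row A \<Longrightarrow> adj A $$ (i, j) = cnj (A $$ (j, i))"
  by (auto simp: adj_def)

lemma adj_adj [simp]: "adj (adj A) = A"
  by (rule eq_matI) auto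

lemma adj_one_mat [simp]: "adj (1\<^sub>m n) = 1\<^sub>m n"
  by (rule eq_matI) auto

lemma adj_mult: "A \<in> carrier_mat m k \<Longrightarrow> B \<in> carrier_mat k n \<Longrightarrow> adj (A * B) = adj B * adj A"
  by (rule eq_matI) (auto simp: scalar_prod_def mult.commute intro!: sum.cong)

lemma dim_kron [simp]:
  "dim_row (kron A B) = dim_row A * dim_row B" "dim_col (kron A B) = dim_col A * dim_col B"
  by (auto simp: kron_def)

lemma kron_carrier_mat [simp]:
  "A \<in> carrier_mat m n \<Longrightarrow> B \<in> carrier_mat p q \<Longrightarrow> kron A B \<in> carrier_mat (m * p) (n * q)"
  by auto

lemma index_kron [simp]:
  "i < dim_row A * dim_row B \<Longrightarrow> j < dim_col A * dim_col B \<Longrightarrow>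
    kron A B $$ (i, j) = A $$ (i div dim_row B, j div dim_col B) * B $$ (i mod dim_row B, j mod dim_col B)"
  by (auto simp: kron_def)

lemma adj_kron: "adj (kron A B) = kron (adj A) (adj B)"
  by (rule eq_matI) (auto simp: index_mult_less)

lemma kron_one_mat: "kron (1\<^sub>m m) (1\<^sub>m n) = 1\<^sub>m (m * n)"
proof (rule eq_matI)
  fix i j
  assume "i < dim_row (1\<^sub>m (m * n))" "j < dim_col (1\<^sub>m (m * n))"
  moreover have "(i div n = j div n \<and> i mod n = j mod n) = (i = j)"
    by (metis div_mult_mod_eq)
  ultimately show "kron (1\<^sub>m m) (1\<^sub>m n) $$ (i, j) = 1\<^sub>m (m * n) $$ (i, j)"
    by (auto simp: index_mult_less)
qed auto

lemma kron_assoc: "kron (kron A B) C = kron A (kron B C)"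
  by (rule eq_matI)
    (auto simp: index_mult_less div_mult_eq_div_div mod_mult_div_eq_div_mod mod_mod_cancel mult_ac)

lemma kron_mult:
  assumes "A \<in> carrier_mat m k" "B \<in> carrier_mat p q" "C \<in> carrier_mat k n" "D \<in> carrier_mat q r"
  shows "kron A B * kron C D = kron (A * C) (B * D)"
proof (rule eq_matI)
  fix i j
  assume "i < dim_row (kron (A * C) (B * D))" "j < dim_col (kron (A * C) (B * D))"
  then have i: "i < m * p" and j: "j < n * r"
    using assms by auto
  let ?a = "\<lambda>u. A $$ (i div p, u) * C $$ (u, j div r)"
  let ?b = "\<lambda>v. B $$ (i mod p, v) * D $$ (v, j mod r)"
  have "(kron A B * kron C D) $$ (i, j) = (\<Sum>w<k * q. ?a (w div q) * ?b (w mod q))"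
    using assms i j by (auto simp: scalar_prod_def index_mult_less mult_ac intro!: sum.cong)
  also have "\<dots> = (\<Sum>u<k. ?a u) * (\<Sum>v<q. ?b v)"
    by (simp add: sum_lessThan_mult_div_mod[where f = "\<lambda>u v. ?a u * ?b v"] sum_product)
  also have "\<dots> = kron (A * C) (B * D) $$ (i, j)"
    using assms i j by (simp add: scalar_prod_def atLeast0LessThan index_mult_less)
  finally show "(kron A B * kron C D) $$ (i, j) = kron (A * C) (B * D) $$ (i, j)" .
qed (use assms in auto)

lemma isometry_one_mat: "isometry (1\<^sub>m n) n n"
  by (simp add: isometry_def)

lemma isometry_kron:
  assumes "isometry V m n" "isometry W p q"
  shows "isometry (kron V W) (m * p) (n * q)"
  using assms by (auto simp: isometry_def adj_kron kron_mult[of _ n m _ q p] kron_one_mat)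

lemma kron_local_commute:
  assumes "T \<in> carrier_mat a a" "V \<in> carrier_mat p q"
  shows "kron T (1\<^sub>m p) * kron (1\<^sub>m a) V = kron (1\<^sub>m a) V * kron T (1\<^sub>m q)"
  using assms by (simp add: kron_mult[of _ a a _ p p _ a _ q] kron_mult[of _ a a _ p q _ a _ q])

lemma kron_one_right_compress:
  assumes "W \<in> carrier_mat p q" "T \<in> carrier_mat p p"
  shows "adj (kron W (1\<^sub>m r)) * kron T (1\<^sub>m r) * kron W (1\<^sub>m r) = kron (adj W * T * W) (1\<^sub>m r)"
  using assms by (simp add: adj_kron kron_mult[of _ q p _ r r _ p _ r] kron_mult[of _ q p _ r r _ q _ r]
      mult_carrier_mat[of _ q p])

lemma mult_assoc_dims:
  "dim_col A = dim_row B \<Longrightarrow> dim_col B = dim_row C \<Longrightarrow> A * B * C = A * (B * (C :: 'a::semiring_0 mat))"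
  by (rule assoc_mult_mat[of A _ "dim_col A" _ "dim_col B" _ "dim_col C"]) auto

context
  fixes B C K T \<zeta> \<chi> :: "complex mat" and N p q n :: nat
  assumes B: "B \<in> carrier_mat N p" and C: "C \<in> carrier_mat N q" and K: "K \<in> carrier_mat N N"
    and T: "T \<in> carrier_mat p p" and \<zeta>: "\<zeta> \<in> carrier_mat p n" and \<chi>: "\<chi> \<in> carrier_mat q n"
    and dilation: "B * \<zeta> = C * \<chi>"
begin

private lemmas dims = carrier_matD[OF B] carrier_matD[OF C] carrier_matD[OF K] carrier_matD[OF T]
  carrier_matD[OF \<zeta>] carrier_matD[OF \<chi>]

lemma compression_transfer:
  assumes "adj B * B = 1\<^sub>m p" and "adj B * K = T * adj B"
  shows "adj \<zeta> * T * \<zeta> = adj \<chi> * (adj C * K * C) * \<chi>"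
proof -
  have "adj B * K * B = T"
    using assms T by (simp add: mult_assoc_dims dims)
  then have "adj \<zeta> * T * \<zeta> = adj (B * \<zeta>) * K * (B * \<zeta>)"
    by (auto simp: adj_mult[OF B \<zeta>] mult_assoc_dims dims)
  also have "\<dots> = adj \<chi> * (adj C * K * C) * \<chi>"
    by (simp add: dilation adj_mult[OF C \<chi>] mult_assoc_dims dims)
  finally show ?thesis .
qed

lemma intertwiner_transfer:
  assumes "adj C * C = 1\<^sub>m q" and "A \<in> carrier_mat n n"
    and "\<zeta> * A = T * \<zeta>" and "K * B = B * T"
  shows "\<chi> * A = adj C * K * C * \<chi>"
proof -
  have "\<chi> = adj C * (B * \<zeta>)"
    using assms(1) \<chi> by (simp add: dilation flip: mult_assoc_dims dims)
  then have "\<chi> * A = adj C * (B * T) * \<zeta>"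
    using assms(2,3) by (simp add: mult_assoc_dims dims)
  also have "\<dots> = adj C * K * (B * \<zeta>)"
    by (simp add: mult_assoc_dims dims flip: assms(4))
  also have "\<dots> = adj C * K * C * \<chi>"
    by (simp add: dilation mult_assoc_dims dims)
  finally show ?thesis .
qed

lemma adj_intertwiner_transfer:
  assumes "adj C * C = 1\<^sub>m q" and "A \<in> carrier_mat n n"
    and "A * adj \<zeta> = adj \<zeta> * T" and "adj B * K = T * adj B"
  shows "A * adj \<chi> = adj \<chi> * (adj C * K * C)"
proof -
  have "\<chi> = adj C * (B * \<zeta>)"
    using assms(1) \<chi> by (simp add: dilation flip: mult_assoc_dims dims)
  then have "adj \<chi> = adj \<zeta> * adj B * C"
    by (simp add: adj_mult[OF adj_carrier_mat[OF C] mult_carrier_mat[OF B \<zeta>]] adj_mult[OF B \<zeta>]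
        mult_assoc_dims dims)
  then have "A * adj \<chi> = adj \<zeta> * (adj B * K) * C"
    using assms(2,3,4) by (simp add: dims flip: mult_assoc_dims)
  also have "\<dots> = adj (B * \<zeta>) * K * C"
    by (simp add: adj_mult[OF B \<zeta>] dims flip: mult_assoc_dims)
  also have "\<dots> = adj \<chi> * (adj C * K * C)"
    by (simp add: dilation adj_mult[OF C \<chi>] dims flip: mult_assoc_dims)
  finally show ?thesis .
qed

end

lemma comprehends_dilation:
  assumes "comprehends dLz dRz \<zeta> dLc dRc \<chi>" and T: "T \<in> carrier_mat dLz dLz"
  obtains N B C K T' where "isometry B N (dLz * dRz)" and "isometry C N (dLc * dRc)"
    and "B * \<zeta> = C * \<chi>" and "K \<in> carrier_mat N N" and "T' \<in> carrier_mat dLc dLc"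
    and "K * B = B * kron T (1\<^sub>m dRz)" and "adj B * K = kron T (1\<^sub>m dRz) * adj B"
    and "adj C * K * C = kron T' (1\<^sub>m dRc)"
proof -
  from assms obtain dM bul cir where bul: "isometry bul (dM * dRc) dRz" and cir: "isometry cir (dLz * dM) dLc"
    and dilation: "kron (1\<^sub>m dLz) bul * \<zeta> = kron cir (1\<^sub>m dRc) * \<chi>"
    unfolding comprehends_def by blast
  let ?B = "kron (1\<^sub>m dLz) bul" and ?C = "kron cir (1\<^sub>m dRc)" and ?N = "dLz * (dM * dRc)"
    and ?K = "kron T (1\<^sub>m (dM * dRc))" and ?T' = "adj cir * kron T (1\<^sub>m dM) * cir"
  have bul_carrier: "bul \<in> carrier_mat (dM * dRc) dRz" and cir_carrier: "cir \<in> carrier_mat (dLz * dM) dLc"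
    using bul cir by (simp_all add: isometry_def)
  have "isometry ?B ?N (dLz * dRz)"
    using isometry_kron[OF isometry_one_mat bul] .
  moreover have "isometry ?C ?N (dLc * dRc)"
    using isometry_kron[OF cir isometry_one_mat] by (simp add: mult.assoc)
  moreover have "?K * ?B = ?B * kron T (1\<^sub>m dRz)"
    using kron_local_commute[OF T bul_carrier] .
  moreover have "adj ?B * ?K = kron T (1\<^sub>m dRz) * adj ?B"
    using kron_local_commute[OF T adj_carrier_mat[OF bul_carrier]] by (simp add: adj_kron)
  moreover have "?K = kron (kron T (1\<^sub>m dM)) (1\<^sub>m dRc)"
    by (simp add: kron_assoc kron_one_mat)
  then have "adj ?C * ?K * ?C = kron ?T' (1\<^sub>m dRc)"
    using kron_one_right_compress[OF cir_carrier] T by simp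
  moreover have "?K \<in> carrier_mat ?N ?N" and "?T' \<in> carrier_mat dLc dLc"
    using T cir_carrier by auto
  ultimately show thesis
    using that dilation by blast
qed

lemma loc_subset_of_comprehends:
  assumes "\<zeta> \<in> carrier_mat (dLz * dRz) n" and "\<chi> \<in> carrier_mat (dLc * dRc) n"
    and comp: "comprehends dLz dRz \<zeta> dLc dRc \<chi>"
  shows "loc n dLz dRz \<zeta> \<subseteq> loc n dLc dRc \<chi>"
proof
  fix A
  assume "A \<in> loc n dLz dRz \<zeta>"
  then obtain T where A: "A \<in> carrier_mat n n" "A = adj \<zeta> * kron T (1\<^sub>m dRz) * \<zeta>"
    and T: "T \<in> carrier_mat dLz dLz"
    unfolding loc_def by blast
  obtain N B C K T' where B: "isometry B N (dLz * dRz)" and C: "isometry C N (dLc * dRc)"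
    and dilation: "B * \<zeta> = C * \<chi>" and K: "K \<in> carrier_mat N N" and T': "T' \<in> carrier_mat dLc dLc"
    and BK: "adj B * K = kron T (1\<^sub>m dRz) * adj B" and CKC: "adj C * K * C = kron T' (1\<^sub>m dRc)"
    by (rule comprehends_dilation[OF comp T]) blast
  from B C have BC: "B \<in> carrier_mat N (dLz * dRz)" "C \<in> carrier_mat N (dLc * dRc)"
    and B_iso: "adj B * B = 1\<^sub>m (dLz * dRz)"
    by (simp_all add: isometry_def)
  have "A = adj \<chi> * kron T' (1\<^sub>m dRc) * \<chi>"
    using compression_transfer[OF BC K kron_carrier_mat[OF T one_carrier_mat] assms(1,2) dilation B_iso BK]
      A(2) CKC by simp
  with A(1) T' show "A \<in> loc n dLc dRc \<chi>"
    unfolding loc_def by blast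
qed

lemma stloc_subset_of_comprehends:
  assumes "\<zeta> \<in> carrier_mat (dLz * dRz) n" and "\<chi> \<in> carrier_mat (dLc * dRc) n"
    and comp: "comprehends dLz dRz \<zeta> dLc dRc \<chi>"
  shows "stloc n dLz dRz \<zeta> \<subseteq> stloc n dLc dRc \<chi>"
proof
  fix A
  assume "A \<in> stloc n dLz dRz \<zeta>"
  then obtain T where A: "A \<in> carrier_mat n n" "A * adj \<zeta> = adj \<zeta> * kron T (1\<^sub>m dRz)"
    "\<zeta> * A = kron T (1\<^sub>m dRz) * \<zeta>" and T: "T \<in> carrier_mat dLz dLz"
    unfolding stloc_def by blast
  obtain N B C K T' where B: "isometry B N (dLz * dRz)" and C: "isometry C N (dLc * dRc)"
    and dilation: "B * \<zeta> = C * \<chi>" and K: "K \<in> carrier_mat N N" and T': "T' \<in> carrier_mat dLc dLc"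
    and KB: "K * B = B * kron T (1\<^sub>m dRz)" and BK: "adj B * K = kron T (1\<^sub>m dRz) * adj B"
    and CKC: "adj C * K * C = kron T' (1\<^sub>m dRc)"
    by (rule comprehends_dilation[OF comp T]) blast
  from B C have BC: "B \<in> carrier_mat N (dLz * dRz)" "C \<in> carrier_mat N (dLc * dRc)"
    and C_iso: "adj C * C = 1\<^sub>m (dLc * dRc)"
    by (simp_all add: isometry_def)
  note transfer_hyps = BC K kron_carrier_mat[OF T one_carrier_mat] assms(1,2) dilation C_iso A(1)
  have "\<chi> * A = kron T' (1\<^sub>m dRc) * \<chi>" and "A * adj \<chi> = adj \<chi> * kron T' (1\<^sub>m dRc)"
    using intertwiner_transfer[OF transfer_hyps A(3) KB] adj_intertwiner_transfer[OF transfer_hyps A(2) BK] CKC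
    by simp_all
  with A(1) T' show "A \<in> stloc n dLc dRc \<chi>"
    unfolding stloc_def by blast
qed

theorem mainTheorem9:
  fixes n dLz dRz dLc dRc :: nat and \<zeta> \<chi> :: "complex mat"
  assumes "splitting_map n dLz dRz \<zeta>"
    and "splitting_map n dLc dRc \<chi>"
    and "comprehends dLz dRz \<zeta> dLc dRc \<chi>"
  shows "loc n dLz dRz \<zeta> \<subseteq> loc n dLc dRc \<chi> \<and> stloc n dLz dRz \<zeta> \<subseteq> stloc n dLc dRc \<chi>"
  using assms loc_subset_of_comprehends stloc_subset_of_comprehends
  by (simp add: splitting_map_def isometry_def)

end
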